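(* Let $(\alpha_j)_{j\in\mathbb N}$, $(\beta_j)_{j\in\mathbb N}$, $(\sigma_j)_{j\in\mathbb N}$ be real sequences with $$\alpha_j\ge 0,\qquad 1\ge\beta_1\ge\beta_2\ge\cdots>0,\qquad 1<\sigma_1\le\sigma_2\le\cdots.$$ Assume further that, with $r_j=\alpha_j/\beta_j$, one has $0<r_1\le r_2\le\cdots$, and that there is a constant $c>0$ such that $\sum_{j=1}^d\alpha_j\le c\,d\,\alpha_d$ for every $d\in\mathbb N$. Let $\mathcal B=\{\mathcal B_d\}_{d\in\mathbb N}$ be the associated sequence of additive random fields with Korobov-kernel marginals (see context). Then $\mathcal B$ is strongly polynomially tractable for the normalized error criterion (NOR) if and only if $$B_*:=\liminf_{d\to\infty}\frac{\ln(\alpha_d/\beta_d)}{\ln d}>0,$$ and in that case the exponent of strong polynomial tractability (for NOR) is $$p^{\rm str-avg}=\max\Big\{\frac{2}{B_*},\frac{2}{\sigma_1-1}\Big\}.$$ In particular, if $\alpha_j=1$ for all $j\in\mathbb N$, then $\mathcal B$ is strongly polynomially tractable for NOR if and only if $\liminf_{d\to\infty}\frac{\ln(1/\beta_d)}{\ln d}>0$.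
   Context: For $\alpha\ge0$, $\beta>0$, $\sigma>1$, let $B_{\alpha,\beta,\sigma}(x)$, $x\in[0,1]$, be a zero-mean random process with covariance function $\kappa_{\alpha,\beta,\sigma}(x,y)=\alpha+2\beta\sum_{k=1}^\infty k^{-\sigma}\cos(2\pi k(x-y))$. Let $B_j$, $j\in\mathbb N$, be independent zero-mean random processes on $[0,1]$ with covariance functions $\kappa_{\alpha_j,\beta_j,\sigma_j}$, and for $d\in\mathbb N$ let $\mathcal B_d(\mathbf x)=\sum_{j=1}^d B_j(x_j)$, $\mathbf x\in[0,1]^d$, a zero-mean random field with covariance $\kappa^{\mathcal B_d}(\mathbf x,\mathbf y)=\sum_{j=1}^d\kappa_{\alpha_j,\beta_j,\sigma_j}(x_j,y_j)$, viewed as a random element of $L_2([0,1]^d)$. The $n$th minimal average case error is $e^{\mathcal B_d}(n)=\inf\{(\mathbb E\|\mathcal B_d-\sum_{m=1}^n(\mathcal B_d,\varphi_m)_{2,d}\psi_m\|_{2,d}^2)^{1/2}:\varphi_m,\psi_m\in L_2([0,1]^d)\}$ and $e^{\mathcal B_d}(0)=(\mathbb E\|\mathcal B_d\|_{2,d}^2)^{1/2}$. (Equivalently, if $\lambda_{d,1}\ge\lambda_{d,2}\ge\cdots$ are the eigenvalues of the covariance operator of $\mathcal B_d$ on $L_2([0,1]^d)$, namely $\sum_{j=1}^d\alpha_j$ together with the numbers $\beta_j k^{-\sigma_j}$, $k\in\mathbb N$, $j=1,\dots,d$, each taken twice, then $e^{\mathcal B_d}(n)^2=\sum_{j>n}\lambda_{d,j}$.)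 For $\varepsilon\in(0,1)$, the NOR information complexity is $n^{\mathcal B_d,\mathrm{NOR}}(\varepsilon)=\min\{n\in\mathbb N: e^{\mathcal B_d}(n)\le\varepsilon\, e^{\mathcal B_d}(0)\}$. The problem is strongly polynomially tractable (SPT) for NOR if there are $C,p\ge0$ with $n^{\mathcal B_d,\mathrm{NOR}}(\varepsilon)\le C\varepsilon^{-p}$ for all $d\in\mathbb N$, $\varepsilon\in(0,1)$; the exponent $p^{\rm str-avg}$ is the infimum of such $p$. Convention: $2/B_*=0$ if $B_*=\infty$. *)

theory Defs
  imports "HOL-Analysis.Analysis"
begin

text \<open>Eigenvalues of the covariance operator of the additive field B_d.
  Index None: the eigenvalue sum_{j=1..d} alpha_j (constant eigenfunction).
  Index Some (j,k,b), 1 <= j <= d, k >= 1, b a bool: eigenvalue beta_j k^(-sigma_j)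
  (the bool accounts for multiplicity two, cos and sin).\<close>

definition eig_index :: "nat \<Rightarrow> (nat \<times> nat \<times> bool) option set" where
  "eig_index d = insert None (Some ` ({1..d} \<times> {1..} \<times> UNIV))"

definition eig :: "(nat \<Rightarrow> real) \<Rightarrow> (nat \<Rightarrow> real) \<Rightarrow> (nat \<Rightarrow> real) \<Rightarrow> nat
    \<Rightarrow> (nat \<times> nat \<times> bool) option \<Rightarrow> real" where
  "eig \<alpha> \<beta> \<sigma> d i = (case i of
      None \<Rightarrow> (\<Sum>j=1..d. \<alpha> j)
    | Some (j, k, b) \<Rightarrow> \<beta> j * real k powr (- \<sigma> j))"

text \<open>Squared n-th minimal average case error: the sum of all eigenvalues except
  the n largest, i.e. the infimum over at most n removed indices of the remaining sum.\<close>
definition err_sq :: "(nat \<Rightarrow> real) \<Rightarrow> (nat \<Rightarrow> real) \<Rightarrow> (nat \<Rightarrow> real) \<Rightarrow> nat \<Rightarrow> nat \<Rightarrow> real" where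
  "err_sq \<alpha> \<beta> \<sigma> d n = Inf {infsum (eig \<alpha> \<beta> \<sigma> d) (eig_index d - S) | S.
       S \<subseteq> eig_index d \<and> finite S \<and> card S \<le> n}"

definition err :: "(nat \<Rightarrow> real) \<Rightarrow> (nat \<Rightarrow> real) \<Rightarrow> (nat \<Rightarrow> real) \<Rightarrow> nat \<Rightarrow> nat \<Rightarrow> real" where
  "err \<alpha> \<beta> \<sigma> d n = sqrt (err_sq \<alpha> \<beta> \<sigma> d n)"

definition n_nor :: "(nat \<Rightarrow> real) \<Rightarrow> (nat \<Rightarrow> real) \<Rightarrow> (nat \<Rightarrow> real) \<Rightarrow> nat \<Rightarrow> real \<Rightarrow> nat" where
  "n_nor \<alpha> \<beta> \<sigma> d \<epsilon> = (LEAST n. err \<alpha> \<beta> \<sigma> d n \<le> \<epsilon> * err \<alpha> \<beta> \<sigma> d 0)"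

definition SPT_bound :: "(nat \<Rightarrow> real) \<Rightarrow> (nat \<Rightarrow> real) \<Rightarrow> (nat \<Rightarrow> real) \<Rightarrow> real \<Rightarrow> bool" where
  "SPT_bound \<alpha> \<beta> \<sigma> p \<longleftrightarrow> p \<ge> 0 \<and> (\<exists>C\<ge>0. \<forall>d\<ge>1. \<forall>\<epsilon>. 0 < \<epsilon> \<and> \<epsilon> < 1 \<longrightarrow>
       real (n_nor \<alpha> \<beta> \<sigma> d \<epsilon>) \<le> C * \<epsilon> powr (- p))"

definition SPT_NOR :: "(nat \<Rightarrow> real) \<Rightarrow> (nat \<Rightarrow> real) \<Rightarrow> (nat \<Rightarrow> real) \<Rightarrow> bool" where
  "SPT_NOR \<alpha> \<beta> \<sigma> \<longleftrightarrow> (\<exists>p. SPT_bound \<alpha> \<beta> \<sigma> p)"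

definition p_str_avg :: "(nat \<Rightarrow> real) \<Rightarrow> (nat \<Rightarrow> real) \<Rightarrow> (nat \<Rightarrow> real) \<Rightarrow> real" where
  "p_str_avg \<alpha> \<beta> \<sigma> = Inf {p. SPT_bound \<alpha> \<beta> \<sigma> p}"

definition two_over :: "ereal \<Rightarrow> real" where
  "two_over B = (if B = \<infinity> then 0 else 2 / real_of_ereal B)"

end

theory Submission
  imports Defs
begin

text \<open>
  Keeping the constant eigenvalue and the \<open>m j\<close> lowest frequencies of every coordinate
  \<open>j \<le> d\<close> leaves a tail of at most \<open>2 \<zeta>(s) \<Sum>j. \<beta> j (m j + 1) powr - \<gamma>\<close> whenever
  \<open>s > 1\<close> and \<open>s + \<gamma> \<le> \<sigma> 1\<close>. If \<open>r j = \<alpha> j / \<beta> j \<ge> \<kappa> j powr b\<close> with \<open>b > 2 / p\<close> and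
  \<open>2 / p < \<sigma> 1 - 1\<close>, the choice \<open>\<gamma> = 2 / p\<close>, \<open>m j \<approx> (\<kappa> \<epsilon>\<^sup>2) powr (- p / 2) j powr (- b p / 2)\<close>
  makes this tail at most \<open>\<epsilon>\<^sup>2 \<Sum>j. \<alpha> j\<close> at a cost \<open>O(\<epsilon> powr - p)\<close> independent of \<open>d\<close>;
  such \<open>b\<close> and \<open>\<kappa>\<close> exist whenever \<open>p > 2 / B\<^sub>*\<close>.

  Conversely, a bound \<open>n(\<epsilon>) \<le> C \<epsilon> powr - p\<close> is refuted as soon as \<open>n(D N powr - t) > N\<close> for
  infinitely many \<open>N\<close> with \<open>p t < 1\<close>. For \<open>d = 1\<close> and \<open>t = (\<sigma> 1 - 1) / 2\<close> this comes from
  the \<open>2 N\<close> eigenvalues \<open>\<beta> 1 k powr - \<sigma> 1\<close>, \<open>k \<le> 2 N\<close>. For \<open>t = b / 2\<close> with \<open>b > B\<^sub>*\<close> it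
  comes, along the infinitely many dimensions with \<open>r d \<le> d powr b\<close>, from the \<open>2 d\<close>
  eigenvalues \<open>\<beta> j \<ge> \<beta> d\<close> of the lowest frequency of each coordinate, because the initial
  error is \<open>O(\<Sum>j\<le>d. \<alpha> j) = O(d \<alpha> d)\<close>.
\<close>

lemma cInf_eq_of_greaterThan_subset:
  fixes S :: "'a :: {conditionally_complete_linorder, dense_linorder, no_top} set"
  assumes "{M<..} \<subseteq> S" "S \<subseteq> {M..}"
  shows "Inf S = M"
proof (rule cInf_eq_non_empty)
  show "S \<noteq> {}" using assms(1) gt_ex[of M] by blast
  show "M \<le> x" if "x \<in> S" for x using assms(2) that by auto
  show "y \<le> M" if "\<And>x. x \<in> S \<Longrightarrow> y \<le> x" for y
  proof (rule dense_ge)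
    fix x assume "M < x"
    then show "y \<le> x" using that assms(1) by blast
  qed
qed

lemma frequently_le_powr_of_liminf_less:
  fixes r :: "nat \<Rightarrow> real"
  assumes "liminf (\<lambda>d. ereal (ln (r d) / ln (real d))) < ereal b" and "\<forall>d\<ge>1. 0 < r d"
  shows "\<exists>\<^sub>F d in sequentially. r d \<le> real d powr b"
proof -
  have "\<exists>\<^sub>F d in sequentially. ln (r d) / ln (real d) < b"
  proof -
    from assms(1) obtain y where y: "y < ereal b"
      and "\<not> (\<forall>\<^sub>F d in sequentially. y < ereal (ln (r d) / ln (real d)))"
      unfolding not_le[symmetric] le_Liminf_iff by blast
    then have "\<exists>\<^sub>F d in sequentially. \<not> y < ereal (ln (r d) / ln (real d))"
      by (simp add: not_eventually)
    then show ?thesis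
    proof (rule frequently_elim1)
      fix d assume "\<not> y < ereal (ln (r d) / ln (real d))"
      then have "ereal (ln (r d) / ln (real d)) < ereal b" using y by (meson le_less_trans not_less)
      then show "ln (r d) / ln (real d) < b" by simp
    qed
  qed
  moreover have "\<forall>\<^sub>F d in sequentially. 2 \<le> d" by (rule eventually_ge_at_top)
  ultimately show ?thesis
  proof (rule frequently_eventually_conj[THEN frequently_elim1], elim conjE)
    fix d :: nat assume "2 \<le> d" "ln (r d) / ln (real d) < b"
    moreover have "0 < ln (real d)" using \<open>2 \<le> d\<close> by simp
    ultimately have "ln (r d) < b * ln (real d)" by (simp add: pos_divide_less_eq)
    then have "exp (ln (r d)) < real d powr b" using \<open>2 \<le> d\<close> by (simp add: powr_def)
    then show "r d \<le> real d powr b" using assms(2) \<open>2 \<le> d\<close> by simp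
  qed
qed

lemma exists_powr_minorant:
  fixes r :: "nat \<Rightarrow> real"
  assumes "ereal b < liminf (\<lambda>d. ereal (ln (r d) / ln (real d)))" and r_pos: "\<forall>j\<ge>1. 0 < r j"
  shows "\<exists>\<kappa>>0. \<forall>j\<ge>1. \<kappa> * real j powr b \<le> r j"
proof -
  obtain d0 where d0: "\<And>d. d \<ge> d0 \<Longrightarrow> b < ln (r d) / ln (real d)"
    using less_LiminfD[OF assms(1)] by (auto simp: eventually_sequentially)
  define D where "D = max d0 2"
  define \<kappa> where "\<kappa> = min 1 (Min ((\<lambda>j. r j / real j powr b) ` {1..D}))"
  have \<kappa>_pos: "0 < \<kappa>" using r_pos by (auto simp: \<kappa>_def D_def)
  moreover have "\<kappa> * real j powr b \<le> r j" if "1 \<le> j" for j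
  proof (cases "j \<le> D")
    case True
    then have "\<kappa> \<le> r j / real j powr b" unfolding \<kappa>_def using that by (intro min.coboundedI2 Min_le) auto
    then show ?thesis using that by (simp add: field_simps)
  next
    case False
    then have "2 \<le> j" "d0 \<le> j" by (auto simp: D_def)
    moreover have "0 < ln (real j)" using \<open>2 \<le> j\<close> by simp
    ultimately have "b * ln (real j) < ln (r j)" using d0[of j] by (simp add: pos_less_divide_eq)
    then have "real j powr b < exp (ln (r j))" using \<open>2 \<le> j\<close> by (simp add: powr_def)
    then have "real j powr b < r j" using r_pos that by simp
    moreover have "\<kappa> * real j powr b \<le> real j powr b" using \<kappa>_pos by (intro mult_left_le_one_le) (auto simp: \<kappa>_def)
    ultimately show ?thesis by linarith
  qed
  ultimately show ?thesis by blast
qed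

lemma eventually_powr_bound_less:
  fixes t p D C :: real
  assumes "0 < t" "p * t < 1" "0 < D"
  shows "\<forall>\<^sub>F N in sequentially. D * real N powr - t < 1 \<and> C * (D * real N powr - t) powr - p < real N"
proof -
  have "\<forall>\<^sub>F x in at_top. D * x powr - t < 1 \<and> C * D powr - p * x powr (p * t) < x \<and> 0 < x"
  proof (intro eventually_conj)
    have "((\<lambda>x. D * x powr - t) \<longlongrightarrow> D * 0) at_top"
      using assms(1) by (intro tendsto_mult tendsto_const tendsto_neg_powr filterlim_ident) auto
    then show "\<forall>\<^sub>F x in at_top. D * x powr - t < 1"
      by (simp add: order_tendstoD(2))
    have "filterlim (\<lambda>x::real. x powr (1 - p * t)) at_top at_top"
      using assms(2) by (intro real_powr_at_top) simp
    then have "\<forall>\<^sub>F x in at_top. C * D powr - p < x powr (1 - p * t) \<and> 0 < x"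
      by (intro eventually_conj) (auto simp: filterlim_at_top_dense eventually_gt_at_top)
    then show "\<forall>\<^sub>F x in at_top. C * D powr - p * x powr (p * t) < x"
    proof (rule eventually_mono, elim conjE)
      fix x :: real assume "C * D powr - p < x powr (1 - p * t)" "0 < x"
      then have "C * D powr - p * x powr (p * t) < x powr (1 - p * t) * x powr (p * t)"
        by (intro mult_strict_right_mono) auto
      also have "\<dots> = x" using \<open>0 < x\<close> by (simp add: powr_add[symmetric])
      finally show "C * D powr - p * x powr (p * t) < x" .
    qed
  qed (simp add: eventually_gt_at_top)
  then have "\<forall>\<^sub>F x in at_top. D * x powr - t < 1 \<and> C * (D * x powr - t) powr - p < x"
  proof (rule eventually_mono, elim conjE)
    fix x :: real assume "0 < x"
    then have "(D * x powr - t) powr - p = D powr - p * x powr (p * t)"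
      using assms(3) by (simp add: powr_mult powr_powr mult.commute)
    then show "D * x powr - t < 1 \<Longrightarrow> C * D powr - p * x powr (p * t) < x \<Longrightarrow>
        D * x powr - t < 1 \<and> C * (D * x powr - t) powr - p < x"
      by (simp add: mult.assoc)
  qed
  then show ?thesis by (rule eventually_compose_filterlim[OF _ filterlim_real_sequentially])
qed

text \<open>The term \<open>k = 0\<close> is \<open>0 powr - s = 0\<close>, so this is the Riemann zeta function.\<close>

definition zeta_sum :: "real \<Rightarrow> real" where
  "zeta_sum s = (\<Sum>k. real k powr - s)"

lemma sum_powr_le_zeta_sum:
  assumes "1 < s" "finite A"
  shows "(\<Sum>k\<in>A. real k powr - s) \<le> zeta_sum s"
  unfolding zeta_sum_def using assms by (intro sum_le_suminf) (auto simp: summable_real_powr_iff)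

lemma zeta_sum_ge_1: "1 < s \<Longrightarrow> 1 \<le> zeta_sum s"
  using sum_powr_le_zeta_sum[of s "{1}"] by simp

lemma two_over_le_iff:
  assumes "0 < B" "0 < p"
  shows "two_over B \<le> p \<longleftrightarrow> ereal (2 / p) \<le> B"
  using assms by (cases B) (auto simp: two_over_def field_simps)

lemma two_over_less_iff:
  assumes "0 < B" "0 < p"
  shows "two_over B < p \<longleftrightarrow> ereal (2 / p) < B"
  using assms by (cases B) (auto simp: two_over_def field_simps)

lemma err_le_iff:
  assumes "0 \<le> \<epsilon>"
  shows "err \<alpha> \<beta> \<sigma> d n \<le> \<epsilon> * err \<alpha> \<beta> \<sigma> d 0 \<longleftrightarrow>
    err_sq \<alpha> \<beta> \<sigma> d n \<le> \<epsilon>\<^sup>2 * err_sq \<alpha> \<beta> \<sigma> d 0"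
proof -
  have "\<epsilon> * sqrt x = sqrt (\<epsilon>\<^sup>2 * x)" for x using assms by (simp add: real_sqrt_mult)
  then show ?thesis by (simp add: err_def)
qed

lemma n_nor_le:
  assumes "0 < \<epsilon>" "err_sq \<alpha> \<beta> \<sigma> d n \<le> \<epsilon>\<^sup>2 * err_sq \<alpha> \<beta> \<sigma> d 0"
  shows "n_nor \<alpha> \<beta> \<sigma> d \<epsilon> \<le> n"
  unfolding n_nor_def using assms by (intro Least_le) (simp add: err_le_iff)

text \<open>Without an \<open>n\<close> reaching the accuracy, \<open>LEAST\<close> in \<^const>\<open>n_nor\<close> would be an
  unspecified value; hence the witness \<open>n\<close>.\<close>

lemma n_nor_gt:
  assumes "0 < \<epsilon>" "err_sq \<alpha> \<beta> \<sigma> d n \<le> \<epsilon>\<^sup>2 * err_sq \<alpha> \<beta> \<sigma> d 0"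
    and "\<And>n. n \<le> N \<Longrightarrow> \<epsilon>\<^sup>2 * err_sq \<alpha> \<beta> \<sigma> d 0 < err_sq \<alpha> \<beta> \<sigma> d n"
  shows "N < n_nor \<alpha> \<beta> \<sigma> d \<epsilon>"
proof -
  have "err_sq \<alpha> \<beta> \<sigma> d (n_nor \<alpha> \<beta> \<sigma> d \<epsilon>) \<le> \<epsilon>\<^sup>2 * err_sq \<alpha> \<beta> \<sigma> d 0"
    unfolding n_nor_def by (rule LeastI2[of _ n]) (use assms(1,2) in \<open>simp_all add: err_le_iff\<close>)
  then show ?thesis using assms(3) by (meson not_le order.asym)
qed

lemma err_sq_ge:
  assumes "\<And>S. S \<subseteq> eig_index d \<Longrightarrow> finite S \<Longrightarrow> card S \<le> n \<Longrightarrow>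
    B \<le> infsum (eig \<alpha> \<beta> \<sigma> d) (eig_index d - S)"
  shows "B \<le> err_sq \<alpha> \<beta> \<sigma> d n"
  unfolding err_sq_def by (rule cInf_greatest) (use assms in auto)

lemma SPT_bound_exponent_ge:
  assumes "SPT_bound \<alpha> \<beta> \<sigma> p" "0 < t" "0 < D"
    and "\<exists>\<^sub>F N in sequentially. \<exists>d\<ge>1. N < n_nor \<alpha> \<beta> \<sigma> d (D * real N powr - t)"
  shows "1 \<le> p * t"
proof (rule ccontr)
  assume "\<not> 1 \<le> p * t"
  then have "p * t < 1" by simp
  obtain C where bound: "\<And>d \<epsilon>. 1 \<le> d \<Longrightarrow> 0 < \<epsilon> \<Longrightarrow> \<epsilon> < 1 \<Longrightarrow>
      real (n_nor \<alpha> \<beta> \<sigma> d \<epsilon>) \<le> C * \<epsilon> powr - p"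
    using assms(1) unfolding SPT_bound_def by blast
  have "\<forall>\<^sub>F N in sequentially.
      0 < N \<and> D * real N powr - t < 1 \<and> C * (D * real N powr - t) powr - p < real N"
    using eventually_gt_at_top eventually_powr_bound_less[OF assms(2) \<open>p * t < 1\<close> assms(3)]
    by (rule eventually_conj)
  from frequently_eventually_conj[OF assms(4) this] obtain N d where
    "0 < N" "D * real N powr - t < 1" "C * (D * real N powr - t) powr - p < real N"
    "1 \<le> d" "N < n_nor \<alpha> \<beta> \<sigma> d (D * real N powr - t)"
    by (auto dest: frequently_ex)
  moreover from this
  have "real (n_nor \<alpha> \<beta> \<sigma> d (D * real N powr - t)) \<le> C * (D * real N powr - t) powr - p"
    using assms(3) by (intro bound) auto
  ultimately show False by linarith
qed

definition tail_index :: "nat \<Rightarrow> (nat \<Rightarrow> nat) \<Rightarrow> (nat \<times> nat \<times> bool) option set" where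
  "tail_index d m = Some ` {(j, k, b). j \<in> {1..d} \<and> m j < k}"

lemma eig_index_eq_insert_tail: "eig_index d = insert None (tail_index d (\<lambda>_. 0))"
  by (auto simp: eig_index_def tail_index_def)

locale additive_korobov =
  fixes \<alpha> \<beta> \<sigma> :: "nat \<Rightarrow> real"
  assumes alpha_nonneg: "\<forall>j\<ge>1. 0 \<le> \<alpha> j"
    and beta_pos: "\<forall>j\<ge>1. 0 < \<beta> j"
    and sigma_1_gt: "1 < \<sigma> 1"
    and sigma_mono: "\<forall>j\<ge>1. \<sigma> j \<le> \<sigma> (Suc j)"
begin

abbreviation "eigval \<equiv> eig \<alpha> \<beta> \<sigma>"
abbreviation "errsq \<equiv> err_sq \<alpha> \<beta> \<sigma>"
abbreviation "alpha_sum d \<equiv> \<Sum>j=1..d. \<alpha> j"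

lemma sigma_1_le: "1 \<le> j \<Longrightarrow> \<sigma> 1 \<le> \<sigma> j"
  by (induction j rule: dec_induct) (use sigma_mono order_trans in auto)

lemma eig_Some [simp]: "eigval d (Some (j, k, b)) = \<beta> j * real k powr - \<sigma> j"
  and eig_None [simp]: "eigval d None = alpha_sum d"
  by (simp_all add: eig_def)

lemma eig_nonneg: "x \<in> eig_index d \<Longrightarrow> 0 \<le> eigval d x"
  using alpha_nonneg beta_pos by (auto simp: eig_index_def less_imp_le intro!: sum_nonneg)

lemma sum_powr_sigma_tail_le:
  assumes "1 < s" "0 \<le> \<gamma>" "s + \<gamma> \<le> \<sigma> 1" "1 \<le> j"
  shows "(\<Sum>k\<in>{m<..N}. real k powr - \<sigma> j) \<le> real (m + 1) powr - \<gamma> * zeta_sum s"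
proof -
  have "real k powr - \<sigma> j \<le> real (m + 1) powr - \<gamma> * real k powr - s" if "m < k" for k
  proof -
    have "real k powr - \<sigma> j \<le> real k powr - (s + \<gamma>)"
      using that assms sigma_1_le[of j] by (intro powr_mono) auto
    also have "\<dots> = real k powr - \<gamma> * real k powr - s"
      by (simp add: powr_add[symmetric] add.commute)
    also have "\<dots> \<le> real (m + 1) powr - \<gamma> * real k powr - s"
      using that assms by (intro mult_right_mono powr_mono2') auto
    finally show ?thesis .
  qed
  then have "(\<Sum>k\<in>{m<..N}. real k powr - \<sigma> j) \<le> real (m + 1) powr - \<gamma> * (\<Sum>k\<in>{m<..N}. real k powr - s)"
    by (auto simp: sum_distrib_left intro!: sum_mono)
  also have "\<dots> \<le> real (m + 1) powr - \<gamma> * zeta_sum s"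
    using assms(1) by (intro mult_left_mono sum_powr_le_zeta_sum) auto
  finally show ?thesis .
qed

lemma sum_eig_tail_le:
  assumes "1 < s" "0 \<le> \<gamma>" "s + \<gamma> \<le> \<sigma> 1" "finite F" "F \<subseteq> tail_index d m"
  shows "sum (eigval d) F \<le> 2 * zeta_sum s * (\<Sum>j=1..d. \<beta> j * real (m j + 1) powr - \<gamma>)"
proof -
  obtain N where N: "\<forall>x\<in>Some -` F. fst (snd x) \<le> N"
    using finite_nat_set_iff_bounded_le finite_imageI finite_vimageI[OF assms(4)] by (metis imageI inj_Some)
  define G where "G = (SIGMA j:{1..d}. {m j<..N} \<times> (UNIV :: bool set))"
  have "F \<subseteq> Some ` G"
    using assms(5) N by (force simp: G_def tail_index_def)
  then have "sum (eigval d) F \<le> sum (eigval d) (Some ` G)"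
    using beta_pos by (intro sum_mono2) (auto simp: G_def intro!: less_imp_le)
  also have "\<dots> = (\<Sum>(j, kb)\<in>G. \<beta> j * real (fst kb) powr - \<sigma> j)"
    by (simp add: sum.reindex eig_def split_def)
  also have "\<dots> = (\<Sum>j=1..d. \<Sum>kb\<in>{m j<..N} \<times> (UNIV :: bool set). \<beta> j * real (fst kb) powr - \<sigma> j)"
    unfolding G_def by (subst sum.Sigma) auto
  also have "\<dots> = (\<Sum>j=1..d. 2 * \<beta> j * (\<Sum>k\<in>{m j<..N}. real k powr - \<sigma> j))"
    by (intro sum.cong refl) (simp add: sum.cartesian_product' sum_distrib_left mult.assoc)
  also have "\<dots> \<le> (\<Sum>j=1..d. 2 * \<beta> j * (real (m j + 1) powr - \<gamma> * zeta_sum s))"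
    using sum_powr_sigma_tail_le[OF assms(1-3)] beta_pos by (intro sum_mono mult_left_mono) auto
  finally show ?thesis by (simp add: sum_distrib_left mult_ac)
qed

lemma summable_on_tail: "eigval d summable_on tail_index d m"
proof (rule nonneg_bdd_above_summable_on)
  show "bdd_above (sum (eigval d) ` {F. F \<subseteq> tail_index d m \<and> finite F})"
    by (rule bdd_aboveI2, rule sum_eig_tail_le[OF sigma_1_gt order.refl]) auto
qed (use beta_pos in \<open>auto simp: tail_index_def less_imp_le\<close>)

lemma summable_on_eig_index: "eigval d summable_on eig_index d"
  unfolding eig_index_eq_insert_tail by (subst summable_on_insert_iff) (rule summable_on_tail)

lemma infsum_tail_le:
  assumes "1 < s" "0 \<le> \<gamma>" "s + \<gamma> \<le> \<sigma> 1"
  shows "infsum (eigval d) (tail_index d m) \<le> 2 * zeta_sum s * (\<Sum>j=1..d. \<beta> j * real (m j + 1) powr - \<gamma>)"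
  using infsum_le_finite_sums[OF summable_on_tail sum_eig_tail_le[OF assms]] .

lemma err_sq_0_eq: "errsq d 0 = alpha_sum d + infsum (eigval d) (tail_index d (\<lambda>_. 0))"
proof -
  have "{infsum (eigval d) (eig_index d - S) | S. S \<subseteq> eig_index d \<and> finite S \<and> card S \<le> 0}
      = {infsum (eigval d) (eig_index d)}" by (auto intro!: exI[of _ "{}"])
  moreover have "None \<notin> tail_index d (\<lambda>_. 0)" by (auto simp: tail_index_def)
  ultimately show ?thesis
    by (simp add: err_sq_def eig_index_eq_insert_tail infsum_insert[OF summable_on_tail])
qed

lemma alpha_sum_le_err_sq_0: "alpha_sum d \<le> errsq d 0"
  unfolding err_sq_0_eq using beta_pos
  by (auto simp: tail_index_def less_imp_le intro!: infsum_nonneg)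

lemma err_sq_0_le: "errsq d 0 \<le> alpha_sum d + 2 * zeta_sum (\<sigma> 1) * (\<Sum>j=1..d. \<beta> j)"
  unfolding err_sq_0_eq using infsum_tail_le[of "\<sigma> 1" 0 d "\<lambda>_. 0"] sigma_1_gt by simp

lemma err_sq_le:
  assumes "S \<subseteq> eig_index d" "finite S" "card S \<le> n"
  shows "errsq d n \<le> infsum (eigval d) (eig_index d - S)"
  unfolding err_sq_def
proof (rule cInf_lower)
  show "bdd_below {infsum (eigval d) (eig_index d - S) | S. S \<subseteq> eig_index d \<and> finite S \<and> card S \<le> n}"
    using eig_nonneg by (intro bdd_belowI[of _ 0]) (auto intro!: infsum_nonneg)
qed (use assms in auto)

lemma err_sq_ge_card:
  assumes "finite F" "F \<subseteq> eig_index d" "\<And>x. x \<in> F \<Longrightarrow> \<mu> \<le> eigval d x" "0 \<le> \<mu>"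
  shows "(real (card F) - real n) * \<mu> \<le> errsq d n"
proof (rule err_sq_ge)
  fix S assume S: "S \<subseteq> eig_index d" "finite S" "card S \<le> n"
  have "card F \<le> card ((F - S) \<union> S)" using assms(1) S(2) by (intro card_mono) auto
  also have "\<dots> \<le> card (F - S) + card S" by (rule card_Un_le)
  finally have "card F \<le> card (F - S) + card S" .
  then have "(real (card F) - real n) * \<mu> \<le> real (card (F - S)) * \<mu>"
    using S(3) assms(4) by (intro mult_right_mono) auto
  also have "\<dots> \<le> sum (eigval d) (F - S)"
    using assms(3) by (intro sum_bounded_below) auto
  also have "\<dots> = infsum (eigval d) (F - S)"
    using assms(1) by simp
  also have "\<dots> \<le> infsum (eigval d) (eig_index d - S)"
    using assms(1,2) eig_nonneg
    by (intro infsum_mono_neutral summable_on_subset[OF summable_on_eig_index]) auto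
  finally show "(real (card F) - real n) * \<mu> \<le> infsum (eigval d) (eig_index d - S)" .
qed

lemma err_sq_le_tail_sum:
  assumes "1 < s" "0 \<le> \<gamma>" "s + \<gamma> \<le> \<sigma> 1"
  shows "errsq d (1 + 2 * (\<Sum>j=1..d. m j)) \<le> 2 * zeta_sum s * (\<Sum>j=1..d. \<beta> j * real (m j + 1) powr - \<gamma>)"
proof -
  define H where "H = Some ` (SIGMA j:{1..d}. {1..m j} \<times> (UNIV :: bool set))"
  have "finite H" "None \<notin> H" by (auto simp: H_def)
  moreover have "card H = (\<Sum>j=1..d. 2 * m j)"
    by (simp add: H_def card_image card_SigmaI card_cartesian_product mult.commute)
  ultimately have card: "card (insert None H) \<le> 1 + 2 * (\<Sum>j=1..d. m j)"
    by (simp add: sum_distrib_left)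
  have "errsq d (1 + 2 * (\<Sum>j=1..d. m j)) \<le> infsum (eigval d) (eig_index d - insert None H)"
    using \<open>finite H\<close> card by (intro err_sq_le) (auto simp: H_def eig_index_def)
  also have "eig_index d - insert None H = tail_index d m"
    by (auto simp: H_def eig_index_def tail_index_def image_iff not_le)
  finally show ?thesis using infsum_tail_le[OF assms, of d m] by linarith
qed

lemma n_nor_le_of_tail_bound:
  assumes "1 < s" "0 \<le> \<gamma>" "s + \<gamma> \<le> \<sigma> 1" "0 < \<epsilon>"
    and "\<And>j. j \<in> {1..d} \<Longrightarrow> 2 * zeta_sum s * \<beta> j * real (m j + 1) powr - \<gamma> \<le> \<epsilon>\<^sup>2 * \<alpha> j"
  shows "n_nor \<alpha> \<beta> \<sigma> d \<epsilon> \<le> 1 + 2 * (\<Sum>j=1..d. m j)"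
proof (rule n_nor_le[OF assms(4)])
  have "errsq d (1 + 2 * (\<Sum>j=1..d. m j)) \<le> (\<Sum>j=1..d. 2 * zeta_sum s * \<beta> j * real (m j + 1) powr - \<gamma>)"
    using err_sq_le_tail_sum[OF assms(1-3)] by (simp add: sum_distrib_left mult.assoc)
  also have "\<dots> \<le> (\<Sum>j=1..d. \<epsilon>\<^sup>2 * \<alpha> j)"
    using assms(5) by (intro sum_mono) auto
  also have "\<dots> = \<epsilon>\<^sup>2 * alpha_sum d"
    by (simp add: sum_distrib_left)
  also have "\<dots> \<le> \<epsilon>\<^sup>2 * errsq d 0"
    using alpha_sum_le_err_sq_0 by (simp add: mult_left_mono)
  finally show "errsq d (1 + 2 * (\<Sum>j=1..d. m j)) \<le> \<epsilon>\<^sup>2 * errsq d 0" .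
qed

lemma exists_err_sq_le:
  assumes "0 < alpha_sum d" "0 < \<epsilon>"
  shows "\<exists>n. errsq d n \<le> \<epsilon>\<^sup>2 * errsq d 0"
proof -
  define \<gamma> where "\<gamma> = (\<sigma> 1 - 1) / 2"
  have \<gamma>: "0 < \<gamma>" "1 < \<sigma> 1 - \<gamma>" using sigma_1_gt by (simp_all add: \<gamma>_def field_simps)
  define B where "B = 2 * zeta_sum (\<sigma> 1 - \<gamma>) * (\<Sum>j=1..d. \<beta> j)"
  have "((\<lambda>M. B * real (Suc M) powr - \<gamma>) \<longlongrightarrow> B * 0) sequentially"
    using \<gamma> by (intro tendsto_mult tendsto_const tendsto_neg_powr
        filterlim_compose[OF filterlim_real_sequentially filterlim_Suc]) auto
  from order_tendstoD(2)[OF this, of "\<epsilon>\<^sup>2 * alpha_sum d"] assms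
  obtain M where M: "B * real (Suc M) powr - \<gamma> < \<epsilon>\<^sup>2 * alpha_sum d"
    by (auto simp: eventually_sequentially)
  have "errsq d (1 + 2 * (\<Sum>j=1..d. M)) \<le> B * real (Suc M) powr - \<gamma>"
    using err_sq_le_tail_sum[of "\<sigma> 1 - \<gamma>" \<gamma> d "\<lambda>_. M"] \<gamma>
    by (simp add: B_def sum_distrib_right[symmetric] mult_ac)
  also have "\<dots> \<le> \<epsilon>\<^sup>2 * errsq d 0"
    using M mult_left_mono[OF alpha_sum_le_err_sq_0[of d], of "\<epsilon>\<^sup>2"] by simp
  finally show ?thesis by blast
qed

lemma lt_n_nor_of_card:
  assumes "0 < \<epsilon>" "0 < alpha_sum d" "finite F" "F \<subseteq> eig_index d"
    and "\<And>x. x \<in> F \<Longrightarrow> \<mu> \<le> eigval d x" "0 \<le> \<mu>"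
    and "\<epsilon>\<^sup>2 * errsq d 0 < (real (card F) - real N) * \<mu>"
  shows "N < n_nor \<alpha> \<beta> \<sigma> d \<epsilon>"
proof -
  obtain n where "errsq d n \<le> \<epsilon>\<^sup>2 * errsq d 0"
    using exists_err_sq_le[OF assms(2,1)] by blast
  then show ?thesis
  proof (rule n_nor_gt[OF assms(1)])
    fix n assume "n \<le> N"
    have "\<epsilon>\<^sup>2 * errsq d 0 < (real (card F) - real N) * \<mu>" by (fact assms(7))
    also have "\<dots> \<le> (real (card F) - real n) * \<mu>"
      using \<open>n \<le> N\<close> assms(6) by (intro mult_right_mono) auto
    also have "\<dots> \<le> errsq d n" by (rule err_sq_ge_card[OF assms(3-6)])
    finally show "\<epsilon>\<^sup>2 * errsq d 0 < errsq d n" .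
  qed
qed

lemma lt_n_nor_dim_1:
  assumes "0 < \<alpha> 1" "0 < \<epsilon>" "\<epsilon>\<^sup>2 * errsq 1 0 < real N * \<beta> 1 * real (2 * N) powr - \<sigma> 1"
  shows "N < n_nor \<alpha> \<beta> \<sigma> 1 \<epsilon>"
proof -
  define F where "F = Some ` ({1::nat} \<times> {1..2 * N} \<times> {True})"
  define \<mu> where "\<mu> = \<beta> 1 * real (2 * N) powr - \<sigma> 1"
  have "card F = 2 * N"
    by (simp add: F_def card_image card_cartesian_product)
  then have "\<epsilon>\<^sup>2 * errsq 1 0 < (real (card F) - real N) * \<mu>"
    using assms(3) by (simp add: \<mu>_def mult.assoc)
  moreover have "\<mu> \<le> eigval 1 x" if "x \<in> F" for x
    using that beta_pos sigma_1_gt by (auto simp: F_def \<mu>_def intro!: mult_left_mono powr_mono2')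
  moreover have "0 < alpha_sum 1" "finite F" "F \<subseteq> eig_index 1" "0 \<le> \<mu>"
    using assms(1) beta_pos by (auto simp: F_def \<mu>_def eig_index_def less_imp_le)
  ultimately show ?thesis by (intro lt_n_nor_of_card[OF assms(2)])
qed

lemma SPT_bound_ge_sigma:
  assumes "0 < \<alpha> 1" "SPT_bound \<alpha> \<beta> \<sigma> p"
  shows "2 / (\<sigma> 1 - 1) \<le> p"
proof -
  define t where "t = (\<sigma> 1 - 1) / 2"
  define E where "E = errsq 1 0"
  define D where "D = sqrt (\<beta> 1 * 2 powr - \<sigma> 1 / (2 * E))"
  have "0 < t" using sigma_1_gt by (simp add: t_def)
  have "0 < E" using alpha_sum_le_err_sq_0[of 1] assms(1) by (simp add: E_def)
  then have "0 < D" using beta_pos by (simp add: D_def)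
  have lt: "N < n_nor \<alpha> \<beta> \<sigma> 1 (D * real N powr - t)" if "1 \<le> N" for N
  proof (rule lt_n_nor_dim_1[OF assms(1)])
    show "0 < D * real N powr - t" using \<open>0 < D\<close> that by simp
    have "0 \<le> \<beta> 1 * 2 powr - \<sigma> 1 / (2 * E)"
      using \<open>0 < E\<close> beta_pos by (intro divide_nonneg_pos mult_nonneg_nonneg) auto
    then have "D\<^sup>2 = \<beta> 1 * 2 powr - \<sigma> 1 / (2 * E)"
      by (simp add: D_def)
    moreover have "(real N powr - t)\<^sup>2 = real N powr (- (2 * t))"
      using that by (simp add: powr_power)
    moreover have "- (2 * t) = 1 - \<sigma> 1"
      by (simp add: t_def field_simps)
    ultimately have "(D * real N powr - t)\<^sup>2 * E = \<beta> 1 * 2 powr - \<sigma> 1 * real N powr (1 - \<sigma> 1) / 2"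
      using \<open>0 < E\<close> by (simp add: power_mult_distrib)
    also have "\<dots> < \<beta> 1 * 2 powr - \<sigma> 1 * real N powr (1 - \<sigma> 1)"
      using beta_pos that by simp
    also have "\<dots> = real N * \<beta> 1 * real (2 * N) powr - \<sigma> 1"
      using that by (simp add: powr_mult powr_mult_base mult_ac)
    finally show "(D * real N powr - t)\<^sup>2 * errsq 1 0 < real N * \<beta> 1 * real (2 * N) powr - \<sigma> 1"
      by (simp add: E_def)
  qed
  have "\<forall>\<^sub>F N in sequentially. \<exists>d\<ge>1. N < n_nor \<alpha> \<beta> \<sigma> d (D * real N powr - t)"
    using eventually_ge_at_top[of 1] by (rule eventually_mono) (use lt in blast)
  then have "\<exists>\<^sub>F N in sequentially. \<exists>d\<ge>1. N < n_nor \<alpha> \<beta> \<sigma> d (D * real N powr - t)"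
    by (rule eventually_frequently[OF sequentially_bot])
  then have "1 \<le> p * t" by (rule SPT_bound_exponent_ge[OF assms(2) \<open>0 < t\<close> \<open>0 < D\<close>])
  then show ?thesis using sigma_1_gt by (simp add: t_def field_simps)
qed

lemma n_nor_le_of_ratio_minorant:
  assumes "0 < \<kappa>" "\<forall>j\<ge>1. \<kappa> * real j powr b \<le> \<alpha> j / \<beta> j"
    and "0 < p" "2 / p < b" "2 / p < \<sigma> 1 - 1" "0 < \<epsilon>"
  defines "K \<equiv> \<kappa> / (2 * zeta_sum (\<sigma> 1 - 2 / p))"
  shows "real (n_nor \<alpha> \<beta> \<sigma> d \<epsilon>) \<le> 1 + 2 * zeta_sum (b * p / 2) * (K * \<epsilon>\<^sup>2) powr (- p / 2)"
proof -
  define \<gamma> s e where "\<gamma> = 2 / p" and "s = \<sigma> 1 - 2 / p" and "e = b * p / 2"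
  have "0 < \<gamma>" "1 < s" "1 < e" "s + \<gamma> \<le> \<sigma> 1" "- p / 2 * - \<gamma> = 1" "- e * - \<gamma> = b"
    using assms(3-5) by (auto simp: \<gamma>_def s_def e_def field_simps)
  have "0 < K" using assms(1) zeta_sum_ge_1[OF \<open>1 < s\<close>] by (simp add: K_def s_def)
  define Y where "Y = (K * \<epsilon>\<^sup>2) powr (- p / 2)"
  have "0 < Y" using \<open>0 < K\<close> assms(6) by (simp add: Y_def)
  \<comment> \<open>With \<open>\<gamma> = 2 / p\<close> this choice gives \<open>(m j + 1) powr - \<gamma> \<le> K \<epsilon>\<^sup>2 j powr b\<close>.\<close>
  define m where "m j = nat \<lfloor>Y * real j powr - e\<rfloor>" for j
  have "n_nor \<alpha> \<beta> \<sigma> d \<epsilon> \<le> 1 + 2 * (\<Sum>j=1..d. m j)"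
  proof (rule n_nor_le_of_tail_bound[OF \<open>1 < s\<close> _ \<open>s + \<gamma> \<le> \<sigma> 1\<close> assms(6)])
    show "0 \<le> \<gamma>" using \<open>0 < \<gamma>\<close> by simp
    fix j assume "j \<in> {1..d}"
    then have "0 < \<beta> j" "0 < real j" using beta_pos by auto
    have "Y * real j powr - e \<le> real (m j + 1)"
      unfolding m_def by linarith
    then have "real (m j + 1) powr - \<gamma> \<le> (Y * real j powr - e) powr - \<gamma>"
      using \<open>0 < Y\<close> \<open>0 < real j\<close> \<open>0 < \<gamma>\<close> by (intro powr_mono2') auto
    also have "\<dots> = K * \<epsilon>\<^sup>2 * real j powr b"
      using \<open>0 < K\<close> assms(6) \<open>0 < real j\<close> \<open>- p / 2 * - \<gamma> = 1\<close> \<open>- e * - \<gamma> = b\<close>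
      by (simp add: Y_def powr_mult powr_powr)
    finally have "2 * zeta_sum s * \<beta> j * real (m j + 1) powr - \<gamma> \<le> \<beta> j * (\<kappa> * real j powr b) * \<epsilon>\<^sup>2"
      using \<open>0 < \<beta> j\<close> zeta_sum_ge_1[OF \<open>1 < s\<close>] by (simp add: K_def s_def field_simps)
    also have "\<dots> \<le> \<beta> j * (\<alpha> j / \<beta> j) * \<epsilon>\<^sup>2"
      using assms(2) \<open>j \<in> {1..d}\<close> \<open>0 < \<beta> j\<close> by (intro mult_right_mono mult_left_mono) auto
    finally show "2 * zeta_sum s * \<beta> j * real (m j + 1) powr - \<gamma> \<le> \<epsilon>\<^sup>2 * \<alpha> j"
      using \<open>0 < \<beta> j\<close> by (simp add: mult.commute)
  qed
  then have "real (n_nor \<alpha> \<beta> \<sigma> d \<epsilon>) \<le> 1 + 2 * (\<Sum>j=1..d. real (m j))"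
    by (simp add: of_nat_sum[symmetric] del: of_nat_sum)
  also have "(\<Sum>j=1..d. real (m j)) \<le> (\<Sum>j=1..d. Y * real j powr - e)"
    using \<open>0 < Y\<close> by (intro sum_mono) (simp add: m_def)
  also have "\<dots> \<le> Y * zeta_sum e"
    using \<open>0 < Y\<close> sum_powr_le_zeta_sum[OF \<open>1 < e\<close>, of "{1..d}"]
    by (simp add: sum_distrib_left[symmetric])
  finally show ?thesis by (simp add: Y_def e_def mult_ac)
qed

lemma SPT_bound_of_ratio_minorant:
  assumes "0 < \<kappa>" "\<forall>j\<ge>1. \<kappa> * real j powr b \<le> \<alpha> j / \<beta> j"
    and "0 < p" "2 / p < b" "2 / p < \<sigma> 1 - 1"
  shows "SPT_bound \<alpha> \<beta> \<sigma> p"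
proof -
  define K where "K = \<kappa> / (2 * zeta_sum (\<sigma> 1 - 2 / p))"
  define A where "A = 2 * zeta_sum (b * p / 2) * K powr (- p / 2)"
  have "1 < \<sigma> 1 - 2 / p" "1 < b * p / 2" using assms(3-5) by (auto simp: field_simps)
  then have "1 \<le> zeta_sum (\<sigma> 1 - 2 / p)" "1 \<le> zeta_sum (b * p / 2)" by (simp_all add: zeta_sum_ge_1)
  then have "0 < K" "0 \<le> A" using assms(1) by (simp_all add: K_def A_def)
  have "real (n_nor \<alpha> \<beta> \<sigma> d \<epsilon>) \<le> (1 + A) * \<epsilon> powr - p" if "0 < \<epsilon>" "\<epsilon> < 1" for d \<epsilon>
  proof -
    have "(\<epsilon>\<^sup>2) powr (- p / 2) = (\<epsilon> powr 2) powr (- p / 2)" using \<open>0 < \<epsilon>\<close> by simp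
    also have "\<dots> = \<epsilon> powr - p" by (simp add: powr_powr)
    finally have "(K * \<epsilon>\<^sup>2) powr (- p / 2) = K powr (- p / 2) * \<epsilon> powr - p"
      using \<open>0 < K\<close> by (simp add: powr_mult)
    then have "real (n_nor \<alpha> \<beta> \<sigma> d \<epsilon>) \<le> 1 + A * \<epsilon> powr - p"
      using n_nor_le_of_ratio_minorant[OF assms \<open>0 < \<epsilon>\<close>, of d]
      by (simp add: K_def A_def mult.assoc)
    moreover have "1 \<le> \<epsilon> powr - p"
      using that assms(3) by (simp add: powr_minus one_le_inverse powr_le1)
    ultimately show ?thesis using \<open>0 \<le> A\<close> by (simp add: distrib_right)
  qed
  then show ?thesis using assms(3) \<open>0 \<le> A\<close> unfolding SPT_bound_def by (auto intro!: exI[of _ "1 + A"])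
qed

end

locale additive_korobov_ordered = additive_korobov +
  fixes c :: real
  assumes beta_antimono: "\<forall>j\<ge>1. \<beta> (Suc j) \<le> \<beta> j"
    and ratio_1_pos: "0 < \<alpha> 1 / \<beta> 1"
    and ratio_mono: "\<forall>j\<ge>1. \<alpha> j / \<beta> j \<le> \<alpha> (Suc j) / \<beta> (Suc j)"
    and c_pos: "0 < c"
    and alpha_sum_le: "\<forall>d\<ge>1. (\<Sum>j=1..d. \<alpha> j) \<le> c * real d * \<alpha> d"
begin

abbreviation "r j \<equiv> \<alpha> j / \<beta> j"

abbreviation "ratio_exponent \<equiv> liminf (\<lambda>d. ereal (ln (r d) / ln (real d)))"

lemma ratio_1_le: "1 \<le> j \<Longrightarrow> r 1 \<le> r j"
  by (induction j rule: dec_induct) (use ratio_mono order_trans in auto)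

lemma ratio_pos: "1 \<le> j \<Longrightarrow> 0 < r j"
  using ratio_1_le ratio_1_pos by fastforce

lemma alpha_pos: "1 \<le> j \<Longrightarrow> 0 < \<alpha> j"
  using ratio_pos beta_pos by (fastforce simp: zero_less_divide_iff)

lemma beta_le:
  assumes "1 \<le> j"
  shows "j \<le> d \<Longrightarrow> \<beta> d \<le> \<beta> j"
proof (induction d rule: dec_induct)
  case (step n)
  then have "\<beta> (Suc n) \<le> \<beta> n" using assms beta_antimono by simp
  with step show ?case by linarith
qed simp

lemma alpha_sum_pos: "1 \<le> d \<Longrightarrow> 0 < alpha_sum d"
  using alpha_pos alpha_nonneg by (intro sum_pos2[of _ 1]) auto

lemma err_sq_0_le_mult_alpha_sum: "\<exists>K>0. \<forall>d. errsq d 0 \<le> K * alpha_sum d"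
proof (intro exI conjI allI)
  define K where "K = 1 + 2 * zeta_sum (\<sigma> 1) / r 1"
  have "0 \<le> 2 * zeta_sum (\<sigma> 1) / r 1"
    using zeta_sum_ge_1[OF sigma_1_gt] ratio_1_pos by (intro divide_nonneg_pos) auto
  then show "0 < K" by (simp add: K_def)
  fix d
  have "(\<Sum>j=1..d. \<beta> j) \<le> (\<Sum>j=1..d. \<alpha> j / r 1)"
  proof (rule sum_mono)
    fix j assume "j \<in> {1..d}"
    then have "0 < \<alpha> j" "0 < \<beta> j" using alpha_pos beta_pos by auto
    then have "\<beta> j = \<alpha> j / r j" by simp
    also have "\<dots> \<le> \<alpha> j / r 1"
      using \<open>j \<in> {1..d}\<close> \<open>0 < \<alpha> j\<close> ratio_1_le[of j] ratio_1_pos ratio_pos[of j]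
      by (intro divide_left_mono mult_pos_pos) auto
    finally show "\<beta> j \<le> \<alpha> j / r 1" .
  qed
  also have "\<dots> = alpha_sum d / r 1" by (rule sum_divide_distrib[symmetric])
  finally have "2 * zeta_sum (\<sigma> 1) * (\<Sum>j=1..d. \<beta> j) \<le> 2 * zeta_sum (\<sigma> 1) * (alpha_sum d / r 1)"
    using zeta_sum_ge_1[OF sigma_1_gt] by (intro mult_left_mono) auto
  then have "errsq d 0 \<le> alpha_sum d + 2 * zeta_sum (\<sigma> 1) * (alpha_sum d / r 1)"
    using err_sq_0_le[of d] by linarith
  also have "\<dots> = K * alpha_sum d" by (simp add: K_def distrib_right)
  finally show "errsq d 0 \<le> K * alpha_sum d" .
qed

lemma lt_n_nor_dim:
  assumes "1 \<le> d" "0 < \<epsilon>" "errsq d 0 \<le> K * alpha_sum d" "2 * c * K * r d * \<epsilon>\<^sup>2 \<le> 1"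
  shows "d < n_nor \<alpha> \<beta> \<sigma> d \<epsilon>"
proof -
  define F where "F = Some ` ({1..d} \<times> {1::nat} \<times> (UNIV :: bool set))"
  have "card F = 2 * d"
    by (simp add: F_def card_image card_cartesian_product)
  have "0 < alpha_sum d" "0 < \<alpha> d" "0 < \<beta> d" using assms(1) alpha_sum_pos alpha_pos beta_pos by auto
  moreover have "alpha_sum d \<le> K * alpha_sum d"
    using alpha_sum_le_err_sq_0[of d] assms(3) by linarith
  ultimately have "0 \<le> K" by (simp add: mult_le_cancel_right1)
  have "K * alpha_sum d \<le> K * (c * real d * \<alpha> d)"
    using alpha_sum_le assms(1) \<open>0 \<le> K\<close> by (simp add: mult_left_mono)
  then have "\<epsilon>\<^sup>2 * errsq d 0 \<le> \<epsilon>\<^sup>2 * (K * (c * real d * \<alpha> d))"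
    using assms(3) by (intro mult_left_mono) auto
  also have "\<dots> = (2 * c * K * r d * \<epsilon>\<^sup>2) * (real d * \<beta> d) / 2"
    using \<open>0 < \<beta> d\<close> by (simp add: field_simps)
  also have "\<dots> \<le> real d * \<beta> d / 2"
  proof -
    have "0 \<le> 2 * c * K * r d * \<epsilon>\<^sup>2"
      using c_pos \<open>0 \<le> K\<close> ratio_pos[OF assms(1)] by (intro mult_nonneg_nonneg) auto
    then show ?thesis
      using assms(4) \<open>0 < \<beta> d\<close> by (intro divide_right_mono mult_left_le_one_le) auto
  qed
  also have "\<dots> < (real (card F) - real d) * \<beta> d"
    using \<open>card F = 2 * d\<close> \<open>0 < \<beta> d\<close> assms(1) by simp
  finally have "\<epsilon>\<^sup>2 * errsq d 0 < (real (card F) - real d) * \<beta> d" .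
  moreover have "finite F" "F \<subseteq> eig_index d" "\<And>x. x \<in> F \<Longrightarrow> \<beta> d \<le> eigval d x"
    using assms(1) beta_le by (auto simp: F_def eig_index_def)
  ultimately show ?thesis
    using \<open>0 < alpha_sum d\<close> \<open>0 < \<beta> d\<close> by (intro lt_n_nor_of_card[OF assms(2)]) auto
qed

lemma lt_n_nor_of_ratio_le_powr:
  assumes "1 \<le> d" "r d \<le> real d powr b" "0 < K" "errsq d 0 \<le> K * alpha_sum d"
  shows "d < n_nor \<alpha> \<beta> \<sigma> d (1 / sqrt (2 * c * K) * real d powr - (b / 2))"
proof (rule lt_n_nor_dim[OF assms(1) _ assms(4)])
  have "(real d powr - (b / 2))\<^sup>2 = real d powr - b"
    using assms(1) by (simp add: powr_power)
  then have "2 * c * K * r d * (1 / sqrt (2 * c * K) * real d powr - (b / 2))\<^sup>2 = r d / real d powr b"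
    using assms(3) c_pos by (simp add: power_mult_distrib power_divide powr_minus field_simps)
  also have "\<dots> \<le> 1"
    using assms(1,2) by (simp only: divide_le_eq_1) simp
  finally show "2 * c * K * r d * (1 / sqrt (2 * c * K) * real d powr - (b / 2))\<^sup>2 \<le> 1" .
qed (use assms(1,3) c_pos in simp)

lemma SPT_bound_imp_le_ratio_exponent:
  assumes "SPT_bound \<alpha> \<beta> \<sigma> p" "0 < p"
  shows "ereal (2 / p) \<le> ratio_exponent"
proof (rule ccontr)
  assume "\<not> ereal (2 / p) \<le> ratio_exponent"
  then have "max ratio_exponent 0 < ereal (2 / p)" using assms(2) by auto
  then obtain b where b: "max ratio_exponent 0 < ereal b" "ereal b < ereal (2 / p)"
    using ereal_dense2 by blast
  then have "ratio_exponent < ereal b" "0 < b / 2" "b < 2 / p" by simp_all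
  obtain K where "0 < K" and K: "\<And>d. errsq d 0 \<le> K * alpha_sum d"
    using err_sq_0_le_mult_alpha_sum by blast
  have "0 < 1 / sqrt (2 * c * K)" using \<open>0 < K\<close> c_pos by simp
  have "\<exists>\<^sub>F d in sequentially. r d \<le> real d powr b"
    by (rule frequently_le_powr_of_liminf_less[OF \<open>ratio_exponent < ereal b\<close>]) (use ratio_pos in auto)
  then have "\<exists>\<^sub>F d in sequentially. 1 \<le> d \<and> r d \<le> real d powr b"
    by (rule frequently_eventually_conj[THEN frequently_elim1, OF _ eventually_ge_at_top]) simp
  then have "\<exists>\<^sub>F N in sequentially.
      \<exists>d\<ge>1. N < n_nor \<alpha> \<beta> \<sigma> d (1 / sqrt (2 * c * K) * real N powr - (b / 2))"
    by (rule frequently_elim1) (use lt_n_nor_of_ratio_le_powr[OF _ _ \<open>0 < K\<close> K] in blast)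
  then have "1 \<le> p * (b / 2)"
    by (rule SPT_bound_exponent_ge[OF assms(1) \<open>0 < b / 2\<close> \<open>0 < 1 / sqrt (2 * c * K)\<close>])
  then show False using \<open>b < 2 / p\<close> assms(2) by (simp add: field_simps)
qed

lemma SPT_bound_imp_max_le:
  assumes "SPT_bound \<alpha> \<beta> \<sigma> p"
  shows "0 < ratio_exponent" "max (two_over ratio_exponent) (2 / (\<sigma> 1 - 1)) \<le> p"
proof -
  have "0 < 2 / (\<sigma> 1 - 1)" using sigma_1_gt by simp
  moreover have "2 / (\<sigma> 1 - 1) \<le> p" by (rule SPT_bound_ge_sigma[OF alpha_pos assms]) simp
  ultimately have "0 < p" by linarith
  then have "0 < ereal (2 / p)" by simp
  also have "ereal (2 / p) \<le> ratio_exponent" by (rule SPT_bound_imp_le_ratio_exponent[OF assms \<open>0 < p\<close>])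
  finally show "0 < ratio_exponent" .
  with \<open>0 < p\<close> \<open>ereal (2 / p) \<le> ratio_exponent\<close> \<open>2 / (\<sigma> 1 - 1) \<le> p\<close>
  show "max (two_over ratio_exponent) (2 / (\<sigma> 1 - 1)) \<le> p"
    by (simp add: two_over_le_iff)
qed

lemma SPT_bound_if_max_less:
  assumes "0 < ratio_exponent" "max (two_over ratio_exponent) (2 / (\<sigma> 1 - 1)) < p"
  shows "SPT_bound \<alpha> \<beta> \<sigma> p"
proof -
  have "0 < 2 / (\<sigma> 1 - 1)" using sigma_1_gt by simp
  then have "0 < p" using assms(2) by linarith
  then have "2 / p < \<sigma> 1 - 1" "ereal (2 / p) < ratio_exponent"
    using assms sigma_1_gt by (auto simp: two_over_less_iff field_simps)
  then obtain b where "ereal (2 / p) < ereal b" and b: "ereal b < ratio_exponent"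
    using ereal_dense2 by blast
  then have "2 / p < b" by simp
  obtain \<kappa> where "0 < \<kappa>" "\<forall>j\<ge>1. \<kappa> * real j powr b \<le> r j"
    using exists_powr_minorant[OF b] ratio_pos by blast
  then show ?thesis
    using SPT_bound_of_ratio_minorant \<open>0 < p\<close> \<open>2 / p < b\<close> \<open>2 / p < \<sigma> 1 - 1\<close> by blast
qed

lemma SPT_NOR_iff: "SPT_NOR \<alpha> \<beta> \<sigma> \<longleftrightarrow> 0 < ratio_exponent"
  unfolding SPT_NOR_def using SPT_bound_imp_max_le(1) SPT_bound_if_max_less by (meson gt_ex)

lemma p_str_avg_eq:
  assumes "0 < ratio_exponent"
  shows "p_str_avg \<alpha> \<beta> \<sigma> = max (two_over ratio_exponent) (2 / (\<sigma> 1 - 1))"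
  unfolding p_str_avg_def
  by (rule cInf_eq_of_greaterThan_subset) (use assms SPT_bound_if_max_less SPT_bound_imp_max_le(2) in auto)

end

theorem theorem2p3:
  fixes \<alpha> \<beta> \<sigma> :: "nat \<Rightarrow> real" and c :: real
  assumes alpha_nonneg: "\<forall>j\<ge>1. \<alpha> j \<ge> 0"
    and beta1: "\<beta> 1 \<le> 1"
    and beta_dec: "\<forall>j\<ge>1. \<beta> (Suc j) \<le> \<beta> j"
    and beta_pos: "\<forall>j\<ge>1. \<beta> j > 0"
    and sigma1: "\<sigma> 1 > 1"
    and sigma_inc: "\<forall>j\<ge>1. \<sigma> j \<le> \<sigma> (Suc j)"
    and r1: "\<alpha> 1 / \<beta> 1 > 0"
    and r_inc: "\<forall>j\<ge>1. \<alpha> j / \<beta> j \<le> \<alpha> (Suc j) / \<beta> (Suc j)"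
    and c_pos: "c > 0"
    and c_bound: "\<forall>d\<ge>1. (\<Sum>j=1..d. \<alpha> j) \<le> c * real d * \<alpha> d"
  defines "Bstar \<equiv> liminf (\<lambda>d. ereal (ln (\<alpha> d / \<beta> d) / ln (real d)))"
  shows "(SPT_NOR \<alpha> \<beta> \<sigma> \<longleftrightarrow> Bstar > 0)
    \<and> (Bstar > 0 \<longrightarrow> p_str_avg \<alpha> \<beta> \<sigma> = max (two_over Bstar) (2 / (\<sigma> 1 - 1)))
    \<and> ((\<forall>j\<ge>1. \<alpha> j = 1) \<longrightarrow>
         (SPT_NOR \<alpha> \<beta> \<sigma> \<longleftrightarrow> liminf (\<lambda>d. ereal (ln (1 / \<beta> d) / ln (real d))) > 0))"
proof -
  interpret additive_korobov_ordered \<alpha> \<beta> \<sigma> c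
    by unfold_locales (use assms in auto)
  have "SPT_NOR \<alpha> \<beta> \<sigma> \<longleftrightarrow> liminf (\<lambda>d. ereal (ln (1 / \<beta> d) / ln (real d))) > 0"
    if "\<forall>j\<ge>1. \<alpha> j = 1"
  proof -
    have "liminf (\<lambda>d. ereal (ln (1 / \<beta> d) / ln (real d))) = ratio_exponent"
      using that by (intro Liminf_eq) (auto simp: eventually_sequentially intro!: exI[of _ 1])
    then show ?thesis by (simp add: SPT_NOR_iff)
  qed
  then show ?thesis using SPT_NOR_iff p_str_avg_eq unfolding Bstar_def by blast
qed

end
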